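(* Let $R$ be an associative unital division ring over a field $F$ of characteristic $0$ and let $\theta_{l,m}\in R$ be invertible for all $(l,m)\in\mathbb{Z}^2$. For $\lambda\in F$ define $$\mathcal{L}_{l,m}=\begin{pmatrix}\theta_{l,m+1}\theta_{l,m}^{-1} & \lambda\\ \lambda & \theta_{l,m+1}^{-1}\theta_{l,m}\end{pmatrix},\qquad \mathcal{M}_{l,m}=\begin{pmatrix}\theta_{l+1,m}\theta_{l,m}^{-1} & \lambda\\ \lambda & \theta_{l+1,m}^{-1}\theta_{l,m}\end{pmatrix}.$$ If the compatibility condition $\mathcal{L}_{l+1,m}\mathcal{M}_{l,m}=\mathcal{M}_{l,m+1}\mathcal{L}_{l,m}$ of the system $\Psi_{l,m+1}=\mathcal{L}_{l,m}\Psi_{l,m}$, $\Psi_{l+1,m}=\mathcal{M}_{l,m}\Psi_{l,m}$ holds for all $(l,m)\in\mathbb{Z}^2$ and all $\lambda\in F$, then for all $(l,m)$ $$\theta_{l+1,m+1}^{-1}\theta_{l+1,m}-\theta_{l+1,m+1}^{-1}\theta_{l,m+1}=\theta_{l,m+1}\theta_{l,m}^{-1}-\theta_{l+1,m}\theta_{l,m}^{-1}.$$ *)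

theory Defs
  imports "HOL-Analysis.Analysis"
begin

definition mat2 :: "'a::zero \<Rightarrow> 'a \<Rightarrow> 'a \<Rightarrow> 'a \<Rightarrow> 'a^2^2" where
  "mat2 a b c d = (\<chi> i j. if i = 1 then (if j = 1 then a else b)
                                    else (if j = 1 then c else d))"

text \<open>R is a unital associative algebra over the field F, given by its structure
  map emb : F -> R, a unital ring homomorphism with central image.\<close>
definition algebra_map :: "('f::field \<Rightarrow> 'a::ring_1) \<Rightarrow> bool" where
  "algebra_map emb \<longleftrightarrow> emb 0 = 0 \<and> emb 1 = 1
     \<and> (\<forall>x y. emb (x + y) = emb x + emb y)
     \<and> (\<forall>x y. emb (x * y) = emb x * emb y)
     \<and> (\<forall>c r. emb c * r = r * emb c)"

end

theory Submission
  imports Defs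
begin

text \<open>The lower-left entry of both sides of the compatibility condition is
  \<open>\<lambda>\<close> times a sum of one diagonal entry of each factor; at \<open>\<lambda> = 1\<close> equating these
  sums and rearranging gives the claimed identity.\<close>

lemma mat2_mult:
  fixes a b c d a' b' c' d' :: "'a::semiring_1"
  shows "mat2 a b c d ** mat2 a' b' c' d'
       = mat2 (a * a' + b * c') (a * b' + b * d') (c * a' + d * c') (c * b' + d * d')"
  by (simp add: mat2_def matrix_matrix_mult_def UNIV_2 vec_eq_iff forall_2)

lemma mat2_eq_iff:
  "mat2 a b c d = mat2 a' b' c' d' \<longleftrightarrow> a = a' \<and> b = b' \<and> c = c' \<and> d = d'"
  by (auto simp: mat2_def vec_eq_iff forall_2)

lemma algebra_map_1: "algebra_map emb \<Longrightarrow> emb 1 = 1"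
  by (simp add: algebra_map_def)

theorem proposition5p2:
  fixes emb :: "'f::field_char_0 \<Rightarrow> 'a::division_ring"
    and \<theta> :: "int \<Rightarrow> int \<Rightarrow> 'a"
    and L M :: "'f \<Rightarrow> int \<Rightarrow> int \<Rightarrow> 'a^2^2"
  assumes alg: "algebra_map emb"
    and inv: "\<And>l m. \<theta> l m \<noteq> 0"
    and L_def: "\<And>lam l m. L lam l m =
        mat2 (\<theta> l (m+1) * inverse (\<theta> l m)) (emb lam)
             (emb lam) (inverse (\<theta> l (m+1)) * \<theta> l m)"
    and M_def: "\<And>lam l m. M lam l m =
        mat2 (\<theta> (l+1) m * inverse (\<theta> l m)) (emb lam)
             (emb lam) (inverse (\<theta> (l+1) m) * \<theta> l m)"
    and compat: "\<And>lam l m. L lam (l+1) m ** M lam l m = M lam l (m+1) ** L lam l m"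
  shows "\<forall>l m. inverse (\<theta> (l+1) (m+1)) * \<theta> (l+1) m
              - inverse (\<theta> (l+1) (m+1)) * \<theta> l (m+1)
            = \<theta> l (m+1) * inverse (\<theta> l m) - \<theta> (l+1) m * inverse (\<theta> l m)"
proof (intro allI)
  fix l m
  have "\<theta> (l+1) m * inverse (\<theta> l m) + inverse (\<theta> (l+1) (m+1)) * \<theta> (l+1) m
      = \<theta> l (m+1) * inverse (\<theta> l m) + inverse (\<theta> (l+1) (m+1)) * \<theta> l (m+1)"
    using compat [of 1 l m]
    by (simp add: L_def M_def mat2_mult mat2_eq_iff algebra_map_1 [OF alg])
  then show "inverse (\<theta> (l+1) (m+1)) * \<theta> (l+1) m
              - inverse (\<theta> (l+1) (m+1)) * \<theta> l (m+1)
            = \<theta> l (m+1) * inverse (\<theta> l m) - \<theta> (l+1) m * inverse (\<theta> l m)"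
    by (simp add: algebra_simps)
qed

end
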